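(* Let $\gamma=(\exp X_L,\exp X_R)$ be a synchronized element of $\widetilde{G}\times\widetilde{G}$ and, for $t\in\mathbb{R}$, let $\gamma^t=(\exp(tX_L),\exp(tX_R))$. Then the absolute causal subset $D(\gamma)$ equals $\bigcup_{n\geq 1} C(\gamma^{1/n})$.
   Context: $G=\mathrm{PSL}(2,\mathbb{R})$, $\mathcal{G}=\mathfrak{sl}(2,\mathbb{R})$, $\widetilde{G}$ is the universal cover of $G$, identified with the universal cover $\widetilde{\mathrm{AdS}}$ of anti-de Sitter space ($\mathrm{SL}(2,\mathbb{R})$ with the Lorentzian metric given by the Killing form, time-oriented). $\widetilde G\times\widetilde G$ acts isometrically on $\widetilde{\mathrm{AdS}}$ by $(g_L,g_R)\cdot x=g_Lxg_R^{-1}$. An element $A\in\mathcal G$ is hyperbolic, parabolic, elliptic if $\det A<0$, $\det A=0$ ($A\ne0$), $\det A>0$; an element of $\widetilde G$ is hyperbolic/parabolic/elliptic if it is the exponential of such an element. An element $(\gamma_L,\gamma_R)$ is synchronized if, up to permuting the two components, it is of one of the forms: $\gamma_L$ trivial and $\gamma_R$ hyperbolic; $\gamma_L$ trivial and $\gamma_R$ parabolic; both nontrivial hyperbolic; $\gamma_L$ parabolic and $\gamma_R$ hyperbolic; both nontrivial parabolic; $\gamma_L,\gamma_R$ elliptic and conjugate in $\widetilde G$. The flow $\gamma^t$ is generated by a Killing vector field $X_\gamma$. The standard causal subset $C(\gamma)$ is the set of $x\in\widetilde{\mathrm{AdS}}$ such that $\gamma x$ is not causally related to $x$. The absolute causal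 subset $D(\gamma)$ is the open set where $X_\gamma$ is spacelike; at $\tilde g$ with projection $g\in G$ the norm of $X_\gamma$ is $-\det(X_L-\mathrm{Ad}(g)X_R)$. *)

theory Defs
  imports "HOL-Analysis.Analysis"
begin

type_synonym mat2 = "real^2^2"

definition mat2 :: "real \<Rightarrow> real \<Rightarrow> real \<Rightarrow> real \<Rightarrow> mat2" where
  "mat2 a b c d = (\<chi> i j. if i = 1 then (if j = 1 then a else b) else (if j = 1 then c else d))"

definition sl2 :: "mat2 set" where
  "sl2 = {A. trace A = 0}"

primrec mpow :: "mat2 \<Rightarrow> nat \<Rightarrow> mat2" where
  "mpow A 0 = mat 1"
| "mpow A (Suc n) = A ** mpow A n"

definition mexp :: "mat2 \<Rightarrow> mat2" where
  "mexp A = (\<Sum>n. (1 / (fact n :: real)) *\<^sub>R mpow A n)"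

type_synonym cover = "real \<times> complex"

text \<open>(tau, w) maps to the matrix with x1 = r cos tau, x2 = r sin tau, (x3,x4) = w,
  r = sqrt (1 + |w|^2); its determinant is x1^2 + x2^2 - x3^2 - x4^2 = 1.\<close>
definition cov_proj :: "cover \<Rightarrow> mat2" where
  "cov_proj z = (let r = sqrt (1 + (cmod (snd z))\<^sup>2);
                     x1 = r * cos (fst z); x2 = r * sin (fst z);
                     x3 = Re (snd z); x4 = Im (snd z)
                 in mat2 (x1 + x3) (x4 - x2) (x4 + x2) (x1 - x3))"

definition te :: cover where "te = (0, 0)"

definition lift_end :: "cover \<Rightarrow> (real \<Rightarrow> mat2) \<Rightarrow> cover" where
  "lift_end x0 c = (THE y. \<exists>l. continuous_on {0..1} l \<and> l 0 = x0 \<and>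
                        (\<forall>s\<in>{0..1}. cov_proj (l s) = c s) \<and> l 1 = y)"

text \<open>Group structure of the universal cover (lifting along the straight path from te).\<close>
definition tmult :: "cover \<Rightarrow> cover \<Rightarrow> cover" where
  "tmult a b = lift_end a (\<lambda>s. cov_proj a ** cov_proj (s *\<^sub>R b))"

definition tinv :: "cover \<Rightarrow> cover" where
  "tinv a = lift_end te (\<lambda>s. matrix_inv (cov_proj (s *\<^sub>R a)))"

definition texp :: "mat2 \<Rightarrow> cover" where
  "texp X = lift_end te (\<lambda>s. mexp (s *\<^sub>R X))"

definition hyperbolic_el :: "cover \<Rightarrow> bool" where
  "hyperbolic_el g \<longleftrightarrow> (\<exists>A\<in>sl2. det A < 0 \<and> texp A = g)"

definition parabolic_el :: "cover \<Rightarrow> bool" where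
  "parabolic_el g \<longleftrightarrow> (\<exists>A\<in>sl2. A \<noteq> 0 \<and> det A = 0 \<and> texp A = g)"

definition elliptic_el :: "cover \<Rightarrow> bool" where
  "elliptic_el g \<longleftrightarrow> (\<exists>A\<in>sl2. det A > 0 \<and> texp A = g)"

definition conjugate_el :: "cover \<Rightarrow> cover \<Rightarrow> bool" where
  "conjugate_el a b \<longleftrightarrow> (\<exists>h. tmult (tmult h a) (tinv h) = b)"

definition sync_ordered :: "cover \<Rightarrow> cover \<Rightarrow> bool" where
  "sync_ordered gL gR \<longleftrightarrow>
     (gL = te \<and> hyperbolic_el gR)
   \<or> (gL = te \<and> parabolic_el gR)
   \<or> (hyperbolic_el gL \<and> hyperbolic_el gR \<and> gL \<noteq> te \<and> gR \<noteq> te)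
   \<or> (parabolic_el gL \<and> hyperbolic_el gR)
   \<or> (parabolic_el gL \<and> parabolic_el gR \<and> gL \<noteq> te \<and> gR \<noteq> te)
   \<or> (elliptic_el gL \<and> elliptic_el gR \<and> conjugate_el gL gR)"

definition synchronized :: "cover \<times> cover \<Rightarrow> bool" where
  "synchronized g \<longleftrightarrow> sync_ordered (fst g) (snd g) \<or> sync_ordered (snd g) (fst g)"

definition act :: "cover \<times> cover \<Rightarrow> cover \<Rightarrow> cover" where
  "act g x = tmult (tmult (fst g) x) (tinv (snd g))"

text \<open>Lorentzian metric from the Killing form: on tangent vectors v (as matrices in M2(R))
  the quadratic form is -det v; the time orientation is given by the timelike field g J.\<close>
definition lq :: "mat2 \<Rightarrow> real" where "lq v = - det v"

definition lB :: "mat2 \<Rightarrow> mat2 \<Rightarrow> real" where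
  "lB u v = (lq (u + v) - lq u - lq v) / 2"

definition Jrot :: mat2 where "Jrot = mat2 0 (-1) 1 0"

definition future_causal :: "mat2 \<Rightarrow> mat2 \<Rightarrow> bool" where
  "future_causal g v \<longleftrightarrow> v \<noteq> 0 \<and> lq v \<le> 0 \<and> lB v (g ** Jrot) < 0"

definition future_causal_curve :: "(real \<Rightarrow> cover) \<Rightarrow> bool" where
  "future_causal_curve c \<longleftrightarrow>
     continuous_on {0..1} c \<and> (cov_proj \<circ> c) piecewise_C1_differentiable_on {0..1} \<and>
     (\<exists>K. finite K \<and> (\<forall>t\<in>{0<..<1} - K. \<exists>v.
         ((cov_proj \<circ> c) has_vector_derivative v) (at t) \<and> future_causal (cov_proj (c t)) v))"

definition causal_le :: "cover \<Rightarrow> cover \<Rightarrow> bool" where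
  "causal_le x y \<longleftrightarrow> x = y \<or> (\<exists>c. future_causal_curve c \<and> c 0 = x \<and> c 1 = y)"

definition causally_related :: "cover \<Rightarrow> cover \<Rightarrow> bool" where
  "causally_related x y \<longleftrightarrow> causal_le x y \<or> causal_le y x"

definition flow :: "mat2 \<Rightarrow> mat2 \<Rightarrow> real \<Rightarrow> cover \<times> cover" where
  "flow XL XR t = (texp (t *\<^sub>R XL), texp (t *\<^sub>R XR))"

definition Cset :: "cover \<times> cover \<Rightarrow> cover set" where
  "Cset g = {x. \<not> causally_related (act g x) x}"

definition killing_vec :: "mat2 \<Rightarrow> mat2 \<Rightarrow> cover \<Rightarrow> mat2" where
  "killing_vec XL XR x = vector_derivative (\<lambda>t. cov_proj (act (flow XL XR t) x)) (at 0)"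

definition Dset :: "mat2 \<Rightarrow> mat2 \<Rightarrow> cover set" where
  "Dset XL XR = {x. lq (killing_vec XL XR x) > 0}"

end

theory Submission
  imports Defs
begin

text \<open>
  The universal cover is \<open>\<real> \<times> \<complex>\<close> with time coordinate \<open>\<tau> = fst\<close>. The map
  \<open>m \<mapsto> (1/\<rho>, (x3 + i x4)/\<rho>)\<close> sends \<open>SL(2,\<real>)\<close> onto the upper unit hemisphere, and
  the Lorentzian metric is \<open>\<rho>\<^sup>2 (- d\<tau>\<^sup>2 + round metric)\<close>. Hence along a future causal
  curve the chordal distance between the hemisphere points is at most the increase of \<open>\<tau>\<close>,
  and two points whose \<open>\<tau>\<close>-difference is smaller than that distance are not causally
  related. If \<open>X\<^sub>\<gamma>\<close> is spacelike at \<open>x\<close>, comparing the first-order behaviour of both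
  quantities along \<open>t \<mapsto> \<gamma>\<^sup>t x\<close> shows that this happens for \<open>\<gamma>\<^sup>1\<^sup>/\<^sup>n x\<close> and \<open>x\<close> when \<open>n\<close> is large.
  Conversely, if \<open>X\<^sub>\<gamma>\<close> is causal or zero at \<open>x\<close>, its norm is constant along the orbit and
  its time orientation cannot change, so the orbit is a future or past causal curve (or a
  point) and \<open>\<gamma>\<^sup>1\<^sup>/\<^sup>n x\<close> is causally related to \<open>x\<close> for every \<open>n\<close>.
\<close>

lemma mat2_nth [simp]:
  "mat2 a b c d $ 1 $ 1 = a" "mat2 a b c d $ 1 $ 2 = b"
  "mat2 a b c d $ 2 $ 1 = c" "mat2 a b c d $ 2 $ 2 = d"
  by (simp_all add: mat2_def)

lemma mat2_eq_iff:
  "(m :: mat2) = n \<longleftrightarrow> m$1$1 = n$1$1 \<and> m$1$2 = n$1$2 \<and> m$2$1 = n$2$1 \<and> m$2$2 = n$2$2"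
  by (auto simp add: vec_eq_iff forall_2)

lemma mat2_mult_nth:
  fixes A B :: mat2 shows
  "(A ** B) $ 1 $ 1 = A$1$1 * B$1$1 + A$1$2 * B$2$1"
  "(A ** B) $ 1 $ 2 = A$1$1 * B$1$2 + A$1$2 * B$2$2"
  "(A ** B) $ 2 $ 1 = A$2$1 * B$1$1 + A$2$2 * B$2$1"
  "(A ** B) $ 2 $ 2 = A$2$1 * B$1$2 + A$2$2 * B$2$2"
  by (simp_all add: matrix_matrix_mult_def sum_2)

lemma mat2_one_nth [simp]:
  "(mat 1 :: mat2) $ 1 $ 1 = 1" "(mat 1 :: mat2) $ 1 $ 2 = 0"
  "(mat 1 :: mat2) $ 2 $ 1 = 0" "(mat 1 :: mat2) $ 2 $ 2 = 1"
  by (simp_all add: mat_def)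

lemma trace_mat2: "trace (m :: mat2) = m$1$1 + m$2$2"
  by (simp add: trace_def sum_2)

lemma continuous_on_mat2 [continuous_intros]:
  assumes "continuous_on S a" "continuous_on S b" "continuous_on S c" "continuous_on S d"
  shows "continuous_on S (\<lambda>s. mat2 (a s) (b s) (c s) (d s))"
proof -
  have "(\<lambda>s. mat2 (a s) (b s) (c s) (d s)) = (\<lambda>s. a s *\<^sub>R mat2 1 0 0 0 + b s *\<^sub>R mat2 0 1 0 0
      + c s *\<^sub>R mat2 0 0 1 0 + d s *\<^sub>R mat2 0 0 0 1)"
    by (simp add: fun_eq_iff mat2_eq_iff)
  then show ?thesis by (simp only:) (intro continuous_intros assms)
qed

lemma matrix_add_rdistrib:
  fixes A :: "'a::semiring_1^'n^'m" shows "(A + B) ** C = A ** C + B ** C"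
  by (vector matrix_matrix_mult_def sum.distrib[symmetric] field_simps)

lemma matrix_diff_ldistrib:
  fixes A :: "'a::ring_1^'n^'m" shows "A ** (B - C) = A ** B - A ** C"
  by (vector matrix_matrix_mult_def sum_subtractf[symmetric] field_simps)

lemma matrix_diff_rdistrib:
  fixes A :: "'a::ring_1^'n^'m" shows "(A - B) ** C = A ** C - B ** C"
  by (vector matrix_matrix_mult_def sum_subtractf[symmetric] field_simps)

lemma matrix_neg_right:
  fixes A :: "'a::ring_1^'n^'m" shows "A ** (- B) = - (A ** B)"
  by (vector matrix_matrix_mult_def sum_negf[symmetric])

lemma matrix_neg_left:
  fixes A :: "'a::ring_1^'n^'m" shows "(- A) ** B = - (A ** B)"
  by (vector matrix_matrix_mult_def sum_negf[symmetric])

lemma matrix_scaleR_left: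
  fixes A :: "'a::real_algebra_1^'n^'m" shows "(k *\<^sub>R A) ** B = k *\<^sub>R (A ** B)"
  by (simp add: scalar_matrix_assoc)

lemma matrix_scaleR_right:
  fixes A :: "'a::real_algebra_1^'n^'m" shows "A ** (k *\<^sub>R B) = k *\<^sub>R (A ** B)"
  by (simp add: matrix_scalar_ac scalar_matrix_assoc)

lemma bounded_bilinear_matrix_mult:
  "bounded_bilinear (\<lambda>(A :: real^'n^'m) (B :: real^'p^'n). A ** B)"
  by (rule bilinear_conv_bounded_bilinear[THEN iffD1])
     (simp add: bilinear_def linear_iff matrix_add_ldistrib matrix_add_rdistrib
       matrix_scaleR_left matrix_scaleR_right)

lemma has_vector_derivative_matrix_mult:
  fixes f :: "real \<Rightarrow> real^'n^'m" and g :: "real \<Rightarrow> real^'p^'n"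
  assumes "(f has_vector_derivative f') (at t)" "(g has_vector_derivative g') (at t)"
  shows "((\<lambda>t. f t ** g t) has_vector_derivative (f t ** g' + f' ** g t)) (at t)"
  using bounded_bilinear.has_vector_derivative[OF bounded_bilinear_matrix_mult assms] .

lemma continuous_on_matrix_mult [continuous_intros]:
  fixes f :: "'a::topological_space \<Rightarrow> real^'n^'m" and g :: "'a \<Rightarrow> real^'p^'n"
  assumes "continuous_on S f" "continuous_on S g"
  shows "continuous_on S (\<lambda>s. f s ** g s)"
  using bounded_bilinear.continuous_on[OF bounded_bilinear_matrix_mult assms] .

lemma continuous_on_det2 [continuous_intros]:
  "continuous_on S f \<Longrightarrow> continuous_on S (\<lambda>s. det (f s :: mat2))"
  unfolding det_2 by (intro continuous_intros)

lemma matrix_inv_eqI: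
  fixes A B :: "'a::semiring_1^'n^'n"
  assumes "A ** B = mat 1" "B ** A = mat 1"
  shows "matrix_inv A = B"
  unfolding matrix_inv_def
proof (rule some_equality)
  show "A ** B = mat 1 \<and> B ** A = mat 1" using assms by simp
  fix C assume "A ** C = mat 1 \<and> C ** A = mat 1"
  then have "C = C ** (A ** B)" "B = (C ** A) ** B" using assms by simp_all
  then show "C = B" by (simp add: matrix_mul_assoc)
qed

lemma matrix_inv_SL2:
  assumes "det m = 1"
  shows "matrix_inv m = mat2 (m$2$2) (- m$1$2) (- m$2$1) (m$1$1)"
  using assms by (intro matrix_inv_eqI) (auto simp: mat2_eq_iff mat2_mult_nth det_2 algebra_simps)

lemma det_neg_mat2: "det (- A :: mat2) = det A"
  by (simp add: det_2)

text \<open>In the coordinates below the determinant is the quadratic form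
  \<open>x1\<^sup>2 + x2\<^sup>2 - x3\<^sup>2 - x4\<^sup>2\<close> of signature (2,2), and \<^const>\<open>cov_proj\<close> is
  \<open>(\<tau>, w) \<mapsto> (\<rho> cos \<tau>, \<rho> sin \<tau>, Re w, Im w)\<close> with \<open>\<rho> = \<surd>(1 + |w|\<^sup>2)\<close>.\<close>

definition x1 :: "mat2 \<Rightarrow> real" where "x1 m = (m$1$1 + m$2$2) / 2"
definition x2 :: "mat2 \<Rightarrow> real" where "x2 m = (m$2$1 - m$1$2) / 2"
definition x3 :: "mat2 \<Rightarrow> real" where "x3 m = (m$1$1 - m$2$2) / 2"
definition x4 :: "mat2 \<Rightarrow> real" where "x4 m = (m$1$2 + m$2$1) / 2"

lemmas coords_defs = x1_def x2_def x3_def x4_def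

lemma det_coords: "det m = (x1 m)\<^sup>2 + (x2 m)\<^sup>2 - (x3 m)\<^sup>2 - (x4 m)\<^sup>2"
  unfolding det_2 coords_defs by (simp add: field_simps power2_eq_square)

lemma mat2_of_coords: "m = mat2 (x1 m + x3 m) (x4 m - x2 m) (x4 m + x2 m) (x1 m - x3 m)"
  by (simp add: mat2_eq_iff coords_defs field_simps)

lemma mat2_eq_iff_coords:
  "m = n \<longleftrightarrow> x1 m = x1 n \<and> x2 m = x2 n \<and> x3 m = x3 n \<and> x4 m = x4 n"
  by (metis mat2_of_coords)

lemma coords_add:
  "x1 (a + b) = x1 a + x1 b" "x2 (a + b) = x2 a + x2 b"
  "x3 (a + b) = x3 a + x3 b" "x4 (a + b) = x4 a + x4 b"
  by (simp_all add: coords_defs field_simps)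

lemma coords_scaleR:
  "x1 (c *\<^sub>R a) = c * x1 a" "x2 (c *\<^sub>R a) = c * x2 a"
  "x3 (c *\<^sub>R a) = c * x3 a" "x4 (c *\<^sub>R a) = c * x4 a"
  by (simp_all add: coords_defs field_simps)

lemma coords_mult_Jrot:
  "x1 (m ** Jrot) = - x2 m" "x2 (m ** Jrot) = x1 m" "x3 (m ** Jrot) = x4 m" "x4 (m ** Jrot) = - x3 m"
  by (simp_all add: Jrot_def mat2_mult_nth coords_defs field_simps)

lemma bounded_linear_coords:
  "bounded_linear x1" "bounded_linear x2" "bounded_linear x3" "bounded_linear x4"
  by (simp_all add: linear_conv_bounded_linear[symmetric] linear_iff coords_add coords_scaleR)

lemma has_real_derivative_coords:
  assumes "(f has_vector_derivative v) (at t)"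
  shows "((\<lambda>u. x1 (f u)) has_real_derivative x1 v) (at t)"
        "((\<lambda>u. x2 (f u)) has_real_derivative x2 v) (at t)"
        "((\<lambda>u. x3 (f u)) has_real_derivative x3 v) (at t)"
        "((\<lambda>u. x4 (f u)) has_real_derivative x4 v) (at t)"
  using bounded_linear.has_vector_derivative[OF bounded_linear_coords(1) assms]
    bounded_linear.has_vector_derivative[OF bounded_linear_coords(2) assms]
    bounded_linear.has_vector_derivative[OF bounded_linear_coords(3) assms]
    bounded_linear.has_vector_derivative[OF bounded_linear_coords(4) assms]
  by (simp_all add: has_real_derivative_iff_has_vector_derivative)

lemma continuous_on_coords [continuous_intros]:
  assumes "continuous_on S f"
  shows "continuous_on S (\<lambda>s. x1 (f s))" "continuous_on S (\<lambda>s. x2 (f s))"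
        "continuous_on S (\<lambda>s. x3 (f s))" "continuous_on S (\<lambda>s. x4 (f s))"
  unfolding coords_defs by (auto intro!: continuous_intros assms)

lemma lq_coords: "lq v = (x3 v)\<^sup>2 + (x4 v)\<^sup>2 - (x1 v)\<^sup>2 - (x2 v)\<^sup>2"
  by (simp add: lq_def det_coords)

lemma lq_scaleR: "lq (b *\<^sub>R v) = b\<^sup>2 * lq v"
  by (simp add: lq_coords coords_scaleR power_mult_distrib algebra_simps)

lemma lB_mult_Jrot: "lB v (m ** Jrot) = x2 m * x1 v - x1 m * x2 v + x4 m * x3 v - x3 m * x4 v"
  unfolding lB_def lq_coords coords_add coords_mult_Jrot by (simp add: power2_eq_square field_simps)

lemma continuous_on_lB [continuous_intros]:
  "continuous_on S f \<Longrightarrow> continuous_on S g \<Longrightarrow> continuous_on S (\<lambda>s. lB (f s) (g s))"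
  unfolding lB_def lq_def by (auto intro!: continuous_intros)

definition rho :: "mat2 \<Rightarrow> real" where "rho m = sqrt ((x1 m)\<^sup>2 + (x2 m)\<^sup>2)"

lemma rho_sq: "(rho m)\<^sup>2 = (x1 m)\<^sup>2 + (x2 m)\<^sup>2"
  by (simp add: rho_def)

lemma SL2_coords: "det m = 1 \<Longrightarrow> (rho m)\<^sup>2 = 1 + (x3 m)\<^sup>2 + (x4 m)\<^sup>2"
  by (simp add: rho_sq det_coords algebra_simps)

lemma rho_pos:
  assumes "det m = 1" shows "rho m > 0"
proof -
  have "(rho m)\<^sup>2 > 0" using SL2_coords[OF assms] by (simp add: add_pos_nonneg)
  then show ?thesis by (simp add: rho_def)
qed

section \<open>The exponential on \<open>sl(2,\<real>)\<close>\<close>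

lemma sl2_square:
  assumes "trace (X :: mat2) = 0" shows "X ** X = (- det X) *\<^sub>R mat 1"
proof -
  have "X$2$2 = - X$1$1" using assms by (simp add: trace_mat2)
  then show ?thesis by (simp add: mat2_eq_iff mat2_mult_nth det_2 algebra_simps)
qed

lemma mpow_sl2:
  assumes "trace X = 0"
  shows "mpow X n = (if even n then (- det X) ^ (n div 2) else 0) *\<^sub>R mat 1
                   + (if even n then 0 else (- det X) ^ (n div 2)) *\<^sub>R X"
proof (induction n)
  case 0
  then show ?case by simp
next
  case (Suc n)
  have "mpow X (Suc n) = (if even n then (- det X) ^ (n div 2) else 0) *\<^sub>R X
       + (if even n then 0 else (- det X) ^ (n div 2)) *\<^sub>R (X ** X)"
    by (simp add: Suc matrix_add_ldistrib matrix_scaleR_right)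
  then show ?case
    unfolding sl2_square[OF assms]
    by (cases "even n") (auto simp: scaleR_scaleR add.commute elim!: oddE evenE)
qed

lemma mpow_scaleR: "mpow (t *\<^sub>R X) n = t ^ n *\<^sub>R mpow X n"
  by (induction n) (simp_all add: matrix_scaleR_left matrix_scaleR_right mult.commute)

text \<open>For \<open>d = - det X\<close> the two series below are \<open>cosh (\<surd>d t)\<close> and
  \<open>sinh (\<surd>d t) / \<surd>d\<close>; as power series in \<open>d\<close> they cover the elliptic,
  parabolic and hyperbolic cases at once.\<close>

definition cosh_coeff :: "real \<Rightarrow> nat \<Rightarrow> real" where
  "cosh_coeff d n = (if even n then d ^ (n div 2) else 0) / fact n"

definition sinh_coeff :: "real \<Rightarrow> nat \<Rightarrow> real" where
  "sinh_coeff d n = (if even n then 0 else d ^ (n div 2)) / fact n"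

definition cosh_ser :: "real \<Rightarrow> real \<Rightarrow> real" where
  "cosh_ser d t = (\<Sum>n. cosh_coeff d n * t ^ n)"

definition sinh_ser :: "real \<Rightarrow> real \<Rightarrow> real" where
  "sinh_ser d t = (\<Sum>n. sinh_coeff d n * t ^ n)"

lemma summable_cosh_sinh_coeff:
  "summable (\<lambda>n. cosh_coeff d n * t ^ n)" "summable (\<lambda>n. sinh_coeff d n * t ^ n)"
proof -
  have half: "\<bar>d ^ (n div 2)\<bar> \<le> max 1 \<bar>d\<bar> ^ n" for n
  proof -
    have "\<bar>d ^ (n div 2)\<bar> \<le> max 1 \<bar>d\<bar> ^ (n div 2)" unfolding power_abs by (rule power_mono) auto
    also have "\<dots> \<le> max 1 \<bar>d\<bar> ^ n" by (rule power_increasing) auto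
    finally show ?thesis .
  qed
  have bound: "norm (c / fact n * t ^ n) \<le> inverse (fact n) * (max 1 \<bar>d\<bar> * \<bar>t\<bar>) ^ n"
    if "\<bar>c\<bar> \<le> max 1 \<bar>d\<bar> ^ n" for c n
    using mult_right_mono[OF that, of "\<bar>t\<bar> ^ n"]
    by (simp add: abs_mult power_abs power_mult_distrib divide_inverse mult_ac)
  have even_le: "\<bar>if even n then d ^ (n div 2) else 0\<bar> \<le> max 1 \<bar>d\<bar> ^ n"
    and odd_le: "\<bar>if even n then 0 else d ^ (n div 2)\<bar> \<le> max 1 \<bar>d\<bar> ^ n" for n
    using half[of n] by auto
  show "summable (\<lambda>n. cosh_coeff d n * t ^ n)"
    unfolding cosh_coeff_def by (rule summable_comparison_test'[OF summable_exp bound[OF even_le]])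
  show "summable (\<lambda>n. sinh_coeff d n * t ^ n)"
    unfolding sinh_coeff_def by (rule summable_comparison_test'[OF summable_exp bound[OF odd_le]])
qed

lemma diffs_cosh_coeff: "diffs (cosh_coeff d) = (\<lambda>n. d * sinh_coeff d n)"
  and diffs_sinh_coeff: "diffs (sinh_coeff d) = cosh_coeff d"
proof -
  have fact_Suc: "real (Suc n) * (x / fact (Suc n)) = x / fact n" for n and x :: real
    by (simp add: field_simps del: of_nat_Suc)
  show "diffs (cosh_coeff d) = (\<lambda>n. d * sinh_coeff d n)" "diffs (sinh_coeff d) = cosh_coeff d"
    by (auto simp: fun_eq_iff diffs_def cosh_coeff_def sinh_coeff_def fact_Suc elim!: oddE)
qed

lemma has_real_derivative_cosh_ser: "(cosh_ser d has_real_derivative d * sinh_ser d t) (at t)"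
proof -
  have "(cosh_ser d has_real_derivative (\<Sum>n. diffs (cosh_coeff d) n * t ^ n)) (at t)"
    unfolding cosh_ser_def[abs_def]
    by (rule termdiffs_strong_converges_everywhere) (rule summable_cosh_sinh_coeff)
  also have "(\<Sum>n. diffs (cosh_coeff d) n * t ^ n) = d * sinh_ser d t"
    unfolding diffs_cosh_coeff sinh_ser_def using summable_cosh_sinh_coeff(2)[of d t]
    by (simp add: suminf_mult mult.assoc)
  finally show ?thesis .
qed

lemma has_real_derivative_sinh_ser: "(sinh_ser d has_real_derivative cosh_ser d t) (at t)"
  using termdiffs_strong_converges_everywhere[OF summable_cosh_sinh_coeff(2)]
  unfolding cosh_ser_def sinh_ser_def[abs_def] diffs_sinh_coeff .

lemma cosh_ser_zero [simp]: "cosh_ser d 0 = 1"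
  and sinh_ser_zero [simp]: "sinh_ser d 0 = 0"
  unfolding cosh_ser_def sinh_ser_def using powser_zero[of "cosh_coeff d"] powser_zero[of "sinh_coeff d"]
  by (simp_all add: cosh_coeff_def sinh_coeff_def)

lemma cosh_sinh_ser_identity: "(cosh_ser d t)\<^sup>2 - d * (sinh_ser d t)\<^sup>2 = 1"
proof -
  have "((\<lambda>t. (cosh_ser d t)\<^sup>2 - d * (sinh_ser d t)\<^sup>2) has_real_derivative 0) (at x)" for x
    by (auto intro!: derivative_eq_intros has_real_derivative_cosh_ser has_real_derivative_sinh_ser
        simp: power2_eq_square algebra_simps)
  from DERIV_isconst_all[OF allI[OF this], of t 0] show ?thesis by simp
qed

lemma continuous_on_cosh_sinh_ser [continuous_intros]:
  assumes "continuous_on S f"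
  shows "continuous_on S (\<lambda>x. cosh_ser d (f x))" "continuous_on S (\<lambda>x. sinh_ser d (f x))"
proof -
  have "continuous_on UNIV (cosh_ser d)" "continuous_on UNIV (sinh_ser d)"
    using has_real_derivative_cosh_ser has_real_derivative_sinh_ser DERIV_isCont
    by (blast intro: continuous_at_imp_continuous_on)+
  then show "continuous_on S (\<lambda>x. cosh_ser d (f x))" "continuous_on S (\<lambda>x. sinh_ser d (f x))"
    by (auto intro: continuous_on_compose2[OF _ assms])
qed

lemma mexp_sl2:
  assumes "trace X = 0"
  shows "mexp (t *\<^sub>R X) = cosh_ser (- det X) t *\<^sub>R mat 1 + sinh_ser (- det X) t *\<^sub>R X"
proof -
  define d where "d = - det X"
  note summable = summable_cosh_sinh_coeff[of d t]
  have "(1 / fact n) *\<^sub>R mpow (t *\<^sub>R X) n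
      = (cosh_coeff d n * t ^ n) *\<^sub>R mat 1 + (sinh_coeff d n * t ^ n) *\<^sub>R X" for n
    unfolding mpow_scaleR mpow_sl2[OF assms] d_def[symmetric]
    by (simp add: cosh_coeff_def sinh_coeff_def scaleR_add_right)
  then have "mexp (t *\<^sub>R X) = (\<Sum>n. (cosh_coeff d n * t ^ n) *\<^sub>R mat 1 + (sinh_coeff d n * t ^ n) *\<^sub>R X)"
    by (simp add: mexp_def)
  also have "\<dots> = (\<Sum>n. (cosh_coeff d n * t ^ n) *\<^sub>R mat 1) + (\<Sum>n. (sinh_coeff d n * t ^ n) *\<^sub>R X)"
    by (intro suminf_add[symmetric] summable_scaleR_left summable)
  also have "\<dots> = cosh_ser d t *\<^sub>R mat 1 + sinh_ser d t *\<^sub>R X"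
    unfolding cosh_ser_def sinh_ser_def by (simp add: suminf_scaleR_left summable)
  finally show ?thesis unfolding d_def .
qed

lemma mexp_zero: "mexp 0 = mat 1"
  using mexp_sl2[of 0 0] by (simp add: trace_mat2)

lemma det_mexp_sl2:
  assumes "trace X = 0" shows "det (mexp (t *\<^sub>R X)) = 1"
proof -
  have "X$2$2 = - X$1$1" using assms by (simp add: trace_mat2)
  then show ?thesis
    using cosh_sinh_ser_identity[of "- det X" t]
    by (simp add: mexp_sl2[OF assms] det_2 power2_eq_square algebra_simps)
qed

lemma mexp_sl2_commute:
  assumes "trace X = 0" shows "X ** mexp (t *\<^sub>R X) = mexp (t *\<^sub>R X) ** X"
  by (simp add: mexp_sl2[OF assms] matrix_add_ldistrib matrix_add_rdistrib
      matrix_scaleR_left matrix_scaleR_right)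

lemma mexp_sl2_neg:
  assumes "trace X = 0"
  shows "mexp (t *\<^sub>R - X) = cosh_ser (- det X) t *\<^sub>R mat 1 - sinh_ser (- det X) t *\<^sub>R X"
proof -
  have "trace (- X) = 0" using assms by (simp add: trace_mat2)
  from mexp_sl2[OF this, of t] show ?thesis by (simp add: det_neg_mat2)
qed

lemma mexp_sl2_mult_neg:
  assumes "trace X = 0" shows "mexp (t *\<^sub>R X) ** mexp (t *\<^sub>R - X) = mat 1"
  using cosh_sinh_ser_identity[of "- det X" t]
  unfolding mexp_sl2[OF assms] mexp_sl2_neg[OF assms]
  by (simp add: matrix_add_rdistrib matrix_diff_ldistrib matrix_scaleR_left matrix_scaleR_right
      sl2_square[OF assms] scaleR_scaleR power2_eq_square algebra_simps)
     (simp flip: scaleR_add_left)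

lemma matrix_inv_mexp_sl2:
  assumes "trace X = 0" shows "matrix_inv (mexp (t *\<^sub>R X)) = mexp (t *\<^sub>R - X)"
proof (rule matrix_inv_eqI)
  show "mexp (t *\<^sub>R X) ** mexp (t *\<^sub>R - X) = mat 1" by (rule mexp_sl2_mult_neg[OF assms])
  have "trace (- X) = 0" using assms by (simp add: trace_mat2)
  from mexp_sl2_mult_neg[OF this, of t] show "mexp (t *\<^sub>R - X) ** mexp (t *\<^sub>R X) = mat 1"
    by simp
qed

lemma has_vector_derivative_mexp_sl2:
  assumes "trace X = 0"
  shows "((\<lambda>t. mexp (t *\<^sub>R X)) has_vector_derivative X ** mexp (t *\<^sub>R X)) (at t)"
proof -
  let ?d = "- det X"
  have "((\<lambda>t. cosh_ser ?d t *\<^sub>R mat 1 + sinh_ser ?d t *\<^sub>R X) has_vector_derivative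
      (cosh_ser ?d t *\<^sub>R 0 + (?d * sinh_ser ?d t) *\<^sub>R mat 1) + (sinh_ser ?d t *\<^sub>R 0 + cosh_ser ?d t *\<^sub>R X))
      (at t)"
    by (intro has_vector_derivative_add has_vector_derivative_scaleR has_vector_derivative_const
        has_real_derivative_cosh_ser has_real_derivative_sinh_ser)
  moreover have "(cosh_ser ?d t *\<^sub>R 0 + (?d * sinh_ser ?d t) *\<^sub>R mat 1) + (sinh_ser ?d t *\<^sub>R 0 + cosh_ser ?d t *\<^sub>R X)
      = X ** mexp (t *\<^sub>R X)"
    by (simp add: mexp_sl2[OF assms] matrix_add_ldistrib matrix_scaleR_right sl2_square[OF assms]
        add.commute)
  ultimately show ?thesis by (simp add: mexp_sl2[OF assms])
qed

lemma continuous_on_mexp_sl2 [continuous_intros]: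
  assumes "trace X = 0" "continuous_on S f"
  shows "continuous_on S (\<lambda>s. mexp (f s *\<^sub>R X))"
  unfolding mexp_sl2[OF assms(1)] by (intro continuous_intros assms(2))

section \<open>Lifting to the universal cover\<close>

definition cover_radius :: "complex \<Rightarrow> real" where
  "cover_radius w = sqrt (1 + (cmod w)\<^sup>2)"

lemma cover_radius_pos: "cover_radius w > 0"
  by (simp add: cover_radius_def add_pos_nonneg)

lemma cov_proj_nth:
  "cov_proj z $ 1 $ 1 = cover_radius (snd z) * cos (fst z) + Re (snd z)"
  "cov_proj z $ 1 $ 2 = Im (snd z) - cover_radius (snd z) * sin (fst z)"
  "cov_proj z $ 2 $ 1 = Im (snd z) + cover_radius (snd z) * sin (fst z)"
  "cov_proj z $ 2 $ 2 = cover_radius (snd z) * cos (fst z) - Re (snd z)"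
  by (simp_all add: cov_proj_def Let_def cover_radius_def)

lemma coords_cov_proj:
  "x1 (cov_proj z) = cover_radius (snd z) * cos (fst z)"
  "x2 (cov_proj z) = cover_radius (snd z) * sin (fst z)"
  "x3 (cov_proj z) = Re (snd z)"
  "x4 (cov_proj z) = Im (snd z)"
  by (simp_all add: coords_defs cov_proj_nth)

lemma rho_cov_proj: "rho (cov_proj z) = cover_radius (snd z)"
proof -
  have "(rho (cov_proj z))\<^sup>2 = (cover_radius (snd z))\<^sup>2 * ((cos (fst z))\<^sup>2 + (sin (fst z))\<^sup>2)"
    unfolding rho_sq coords_cov_proj by algebra
  then show ?thesis
    using cover_radius_pos[of "snd z"] by (simp add: rho_def)
qed

lemma det_cov_proj: "det (cov_proj z) = 1"
  using rho_cov_proj[of z] rho_sq[of "cov_proj z"]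
  by (simp add: det_coords coords_cov_proj cover_radius_def cmod_power2)

lemma snd_eq_coords_cov_proj: "snd z = Complex (x3 (cov_proj z)) (x4 (cov_proj z))"
  by (simp add: coords_cov_proj)

lemma cover_radius_coords:
  assumes "det m = 1" shows "cover_radius (Complex (x3 m) (x4 m)) = rho m"
  using SL2_coords[OF assms] rho_pos[OF assms]
  by (simp add: cover_radius_def cmod_power2 add.assoc real_sqrt_unique)

lemma continuous_on_cov_proj [continuous_intros]:
  fixes f :: "'a::t2_space \<Rightarrow> cover"
  assumes "continuous_on S f"
  shows "continuous_on S (\<lambda>s. cov_proj (f s))"
proof -
  have "(\<lambda>s. cov_proj (f s)) = (\<lambda>s. mat2
      (cover_radius (snd (f s)) * cos (fst (f s)) + Re (snd (f s)))
      (Im (snd (f s)) - cover_radius (snd (f s)) * sin (fst (f s)))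
      (Im (snd (f s)) + cover_radius (snd (f s)) * sin (fst (f s)))
      (cover_radius (snd (f s)) * cos (fst (f s)) - Re (snd (f s))))"
    by (simp add: fun_eq_iff mat2_eq_iff cov_proj_nth)
  then show ?thesis
    unfolding cover_radius_def by (simp only:) (intro continuous_intros assms)
qed

lemma cov_proj_te [simp]: "cov_proj te = mat 1"
  by (simp add: mat2_eq_iff cov_proj_nth te_def cover_radius_def)

lemma te_eq_zero: "te = 0"
  by (simp add: te_def zero_prod_def)

lemma cov_proj_zero [simp]: "cov_proj 0 = mat 1"
  by (simp flip: te_eq_zero)

lemma scaleR_te [simp]: "s *\<^sub>R te = te"
  by (simp add: te_eq_zero)

text \<open>The angle of a lift is a continuous logarithm of \<open>x1 + i x2\<close>, shifted by a
  multiple of \<open>2\<pi>\<close> to match the base point.\<close>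

lemma cov_proj_lift_exists:
  fixes S :: "'a::real_normed_vector set"
  assumes "convex S" "continuous_on S f" "\<And>s. s \<in> S \<Longrightarrow> det (f s) = 1"
    and "s0 \<in> S" "cov_proj z0 = f s0"
  obtains l where "continuous_on S l" "l s0 = z0" "\<And>s. s \<in> S \<Longrightarrow> cov_proj (l s) = f s"
proof -
  define h where "h s = Complex (x1 (f s)) (x2 (f s))" for s
  have rho_h: "cmod (h s) = rho (f s)" for s
    by (simp add: h_def cmod_def rho_def)
  have "continuous_on S h"
    unfolding h_def Complex_eq by (intro continuous_intros assms)
  moreover have "h s \<noteq> 0" if "s \<in> S" for s
    using rho_pos[OF assms(3)[OF that]] rho_h[of s] by auto
  ultimately obtain g where gc: "continuous_on S g" and hg: "\<And>s. s \<in> S \<Longrightarrow> h s = exp (g s)"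
    using continuous_logarithm_on_contractible[OF _ convex_imp_contractible[OF assms(1)]] by metis
  have polar: "x1 (f s) = rho (f s) * cos (Im (g s))" "x2 (f s) = rho (f s) * sin (Im (g s))"
    if "s \<in> S" for s
  proof -
    have "exp (Re (g s)) = rho (f s)" using rho_h[of s] hg[OF that] by simp
    with hg[OF that] show "x1 (f s) = rho (f s) * cos (Im (g s))" "x2 (f s) = rho (f s) * sin (Im (g s))"
      by (simp_all add: h_def complex_eq_iff Re_exp Im_exp)
  qed
  define \<delta> where "\<delta> = fst z0 - Im (g s0)"
  have "cos (fst z0) = cos (Im (g s0)) \<and> sin (fst z0) = sin (Im (g s0))"
    using arg_cong[OF assms(5), of x1] arg_cong[OF assms(5), of x2] polar[OF assms(4)]
      rho_pos[OF assms(3)[OF assms(4)]] arg_cong[OF assms(5), of rho]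
    by (simp add: coords_cov_proj rho_cov_proj)
  then have cos_\<delta>: "cos \<delta> = 1" and sin_\<delta>: "sin \<delta> = 0"
    unfolding \<delta>_def cos_diff sin_diff by (simp_all add: mult.commute flip: power2_eq_square)
  define l where "l s = (Im (g s) + \<delta>, Complex (x3 (f s)) (x4 (f s)))" for s
  show ?thesis
  proof
    show "continuous_on S l"
      unfolding l_def Complex_eq by (intro continuous_intros gc assms)
    show "l s0 = z0"
      using snd_eq_coords_cov_proj[of z0] assms(5) by (simp add: l_def \<delta>_def prod_eq_iff)
    show "cov_proj (l s) = f s" if "s \<in> S" for s
      unfolding mat2_eq_iff_coords
      using polar[OF that] cover_radius_coords[OF assms(3)[OF that]]
      by (simp add: l_def coords_cov_proj cos_add sin_add cos_\<delta> sin_\<delta>)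
  qed
qed

lemma cov_proj_lift_unique:
  fixes S :: "'a::topological_space set"
  assumes "connected S" "continuous_on S l1" "continuous_on S l2"
    and "\<And>s. s \<in> S \<Longrightarrow> cov_proj (l1 s) = cov_proj (l2 s)" "s0 \<in> S" "l1 s0 = l2 s0" "s \<in> S"
  shows "l1 s = l2 s"
proof -
  have snd_eq: "snd (l1 t) = snd (l2 t)" if "t \<in> S" for t
    using snd_eq_coords_cov_proj[of "l1 t"] snd_eq_coords_cov_proj[of "l2 t"] assms(4)[OF that] by simp
  define q where "q t = (fst (l1 t) - fst (l2 t)) / (2 * pi)" for t
  have "q t \<in> \<int>" if "t \<in> S" for t
  proof -
    have "cos (fst (l1 t)) = cos (fst (l2 t)) \<and> sin (fst (l1 t)) = sin (fst (l2 t))"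
      using arg_cong[OF assms(4)[OF that], of x1] arg_cong[OF assms(4)[OF that], of x2]
        cover_radius_pos[of "snd (l2 t)"]
      by (simp add: coords_cov_proj snd_eq[OF that])
    then have "cos (fst (l1 t) - fst (l2 t)) = 1"
      unfolding cos_diff by (simp flip: power2_eq_square)
    then obtain n :: int where "fst (l1 t) - fst (l2 t) = n * 2 * pi"
      by (auto simp: cos_one_2pi_int)
    then show ?thesis by (simp add: q_def)
  qed
  moreover have "continuous_on S q"
    unfolding q_def by (intro continuous_intros assms) auto
  ultimately have "q constant_on S"
    using assms(1) by (intro continuous_discrete_range_constant)
      (auto intro!: exI[of _ 1] Ints_nonzero_abs_ge1 Ints_diff)
  then have "q s = q s0"
    using assms(5,7) unfolding constant_on_def by metis
  then have "fst (l1 s) = fst (l2 s)" using assms(6) by (simp add: q_def)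
  then show ?thesis using snd_eq[OF assms(7)] by (simp add: prod_eq_iff)
qed

lemma lift_end_eqI:
  assumes "continuous_on {0..1} l" "l 0 = x0" "\<And>s. s \<in> {0..1} \<Longrightarrow> cov_proj (l s) = c s"
  shows "lift_end x0 c = l 1"
  unfolding lift_end_def
proof (rule the_equality)
  show "\<exists>l'. continuous_on {0..1} l' \<and> l' 0 = x0 \<and> (\<forall>s\<in>{0..1}. cov_proj (l' s) = c s) \<and> l' 1 = l 1"
    using assms by blast
  fix y
  assume "\<exists>l'. continuous_on {0..1} l' \<and> l' 0 = x0 \<and> (\<forall>s\<in>{0..1}. cov_proj (l' s) = c s) \<and> l' 1 = y"
  then obtain l' where "continuous_on {0..1} l'" "l' 0 = x0" "\<forall>s\<in>{0..1}. cov_proj (l' s) = c s"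
    and "l' 1 = y"
    by blast
  moreover have "l' 1 = l 1"
    by (rule cov_proj_lift_unique[of "{0..1::real}" l' l 0]) (use calculation assms in auto)
  ultimately show "y = l 1" by simp
qed

lemma cov_proj_lift_end:
  assumes "continuous_on {0..1} c" "\<And>s. s \<in> {0..1} \<Longrightarrow> det (c s) = 1" "cov_proj x0 = c 0"
  shows "cov_proj (lift_end x0 c) = c 1"
proof -
  obtain l where "continuous_on {0..1} l" "l 0 = x0" "\<And>s. s \<in> {0..1} \<Longrightarrow> cov_proj (l s) = c s"
    using cov_proj_lift_exists[of "{0..1::real}" c 0 x0] assms by auto
  then show ?thesis using lift_end_eqI by simp
qed

lemma lift_end_const: "lift_end z (\<lambda>s. cov_proj z) = z"
  using lift_end_eqI[of "\<lambda>s. z" z "\<lambda>s. cov_proj z"] by simp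

lemma lift_end_segment: "lift_end te (\<lambda>s. cov_proj (s *\<^sub>R z)) = z"
  using lift_end_eqI[of "\<lambda>s. s *\<^sub>R z" te "\<lambda>s. cov_proj (s *\<^sub>R z)"]
  by (simp add: te_eq_zero continuous_intros)

lemma continuous_on_compose_UNIV:
  "continuous_on UNIV f \<Longrightarrow> continuous_on S g \<Longrightarrow> continuous_on S (\<lambda>x. f (g x))"
  by (rule continuous_on_compose2) auto

lemma continuous_on_lift_end:
  fixes H :: "real \<Rightarrow> real \<Rightarrow> mat2" and A :: "real \<Rightarrow> cover"
  assumes H: "continuous_on (UNIV \<times> {0..1}) (\<lambda>(t, s). H t s)"
    and det_H: "\<And>t s. s \<in> {0..1} \<Longrightarrow> det (H t s) = 1"
    and A: "continuous_on UNIV A" "\<And>t. cov_proj (A t) = H t 0"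
  shows "continuous_on UNIV (\<lambda>t. lift_end (A t) (H t))"
proof -
  obtain l where lc: "continuous_on (UNIV \<times> {0..1}) l" and l00: "l (0, 0) = A 0"
    and lH: "\<And>p. p \<in> UNIV \<times> {0..1} \<Longrightarrow> cov_proj (l p) = (\<lambda>(t, s). H t s) p"
  proof (rule cov_proj_lift_exists[OF convex_Times[OF convex_UNIV convex_real_interval(5)] H])
    show "det ((\<lambda>(t, s). H t s) p) = 1" if "p \<in> UNIV \<times> {0..1}" for p
      using that det_H by auto
    show "cov_proj (A 0) = (\<lambda>(t, s). H t s) (0, 0)" by (simp add: A(2))
  qed auto
  then have lH: "\<And>t s. s \<in> {0..1} \<Longrightarrow> cov_proj (l (t, s)) = H t s" by auto
  have slice: "continuous_on S (\<lambda>t. l (f t, g t))"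
    if "continuous_on S f" "continuous_on S g" "\<And>t. t \<in> S \<Longrightarrow> g t \<in> {0..1}" for S f g
    by (rule continuous_on_compose2[OF lc]) (use that in \<open>auto intro!: continuous_intros\<close>)
  have "l (t, 0) = A t" for t
    by (rule cov_proj_lift_unique[of UNIV "\<lambda>t. l (t, 0)" A 0])
       (use lH A l00 slice[OF continuous_on_id continuous_on_const] in auto)
  then have "lift_end (A t) (H t) = l (t, 1)" for t
    using lH by (intro lift_end_eqI) (auto intro!: slice continuous_intros)
  then show ?thesis
    using slice[of UNIV "\<lambda>t. t" "\<lambda>_. 1"] by (simp add: continuous_intros)
qed

lemma cov_proj_tmult: "cov_proj (tmult a b) = cov_proj a ** cov_proj b"
  unfolding tmult_def
  by (subst cov_proj_lift_end) (auto simp: det_mul det_cov_proj intro!: continuous_intros)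

lemma tmult_te_left: "tmult te x = x"
  by (simp add: tmult_def lift_end_segment)

lemma tmult_te_right: "tmult x te = x"
  by (simp add: tmult_def lift_end_const)

lemma matrix_inv_one: "matrix_inv (mat 1 :: 'a::semiring_1^'n^'n) = mat 1"
  by (rule matrix_inv_eqI) simp_all

lemma det_matrix_inv_cov_proj: "det (matrix_inv (cov_proj z)) = 1"
  using det_cov_proj[of z] by (simp add: matrix_inv_SL2 det_2 mult.commute)

lemma continuous_on_matrix_inv_cov_proj [continuous_intros]:
  fixes f :: "'a::t2_space \<Rightarrow> cover"
  assumes "continuous_on S f"
  shows "continuous_on S (\<lambda>s. matrix_inv (cov_proj (f s)))"
  unfolding matrix_inv_SL2[OF det_cov_proj] by (intro continuous_intros assms)

lemma cov_proj_tinv: "cov_proj (tinv a) = matrix_inv (cov_proj a)"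
  unfolding tinv_def
  by (subst cov_proj_lift_end)
     (auto simp: det_matrix_inv_cov_proj matrix_inv_one intro!: continuous_intros)

lemma tinv_te: "tinv te = te"
  using lift_end_const[of te] by (simp add: tinv_def matrix_inv_one)

lemma continuous_on_tmult:
  fixes A B :: "real \<Rightarrow> cover"
  assumes "continuous_on UNIV A" "continuous_on UNIV B"
  shows "continuous_on UNIV (\<lambda>t. tmult (A t) (B t))"
  unfolding tmult_def
  by (rule continuous_on_lift_end)
     (auto simp: case_prod_beta det_mul det_cov_proj
       intro!: continuous_intros continuous_on_compose_UNIV[OF assms(1)]
       continuous_on_compose_UNIV[OF assms(2)])

lemma continuous_on_tinv:
  fixes A :: "real \<Rightarrow> cover"
  assumes "continuous_on UNIV A"
  shows "continuous_on UNIV (\<lambda>t. tinv (A t))"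
  unfolding tinv_def
  by (rule continuous_on_lift_end)
     (auto simp: case_prod_beta det_matrix_inv_cov_proj matrix_inv_one
       intro!: continuous_intros continuous_on_compose_UNIV[OF assms])

lemma cov_proj_texp:
  assumes "trace X = 0" shows "cov_proj (texp X) = mexp X"
  unfolding texp_def
  using cov_proj_lift_end[of "\<lambda>s. mexp (s *\<^sub>R X)" te] det_mexp_sl2[OF assms]
  by (simp add: mexp_zero continuous_intros assms)

lemma texp_zero: "texp 0 = te"
  using lift_end_const[of te] by (simp add: texp_def mexp_zero)

lemma continuous_on_texp_line:
  assumes "trace X = 0" shows "continuous_on UNIV (\<lambda>t. texp (t *\<^sub>R X))"
proof -
  obtain l where lc: "continuous_on UNIV l" and "l 0 = te" and "\<And>t. cov_proj (l t) = mexp (t *\<^sub>R X)"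
    using cov_proj_lift_exists[of UNIV "\<lambda>t. mexp (t *\<^sub>R X)" 0 te]
      continuous_on_mexp_sl2[OF assms continuous_on_id] det_mexp_sl2[OF assms]
    by (auto simp: mexp_zero)
  then have "texp (t *\<^sub>R X) = l t" for t
    unfolding texp_def
    by (intro lift_end_eqI[of "\<lambda>s. l (s * t)", simplified])
       (auto intro!: continuous_on_compose_UNIV[OF lc] continuous_intros)
  then show ?thesis using lc by simp
qed

lemma trace_sl2_closed:
  assumes "trace (X :: mat2) = 0" shows "trace (- X) = 0" "trace (t *\<^sub>R X) = 0"
  using assms by (simp_all add: trace_mat2 flip: distrib_left)

definition orbit_mat :: "mat2 \<Rightarrow> mat2 \<Rightarrow> mat2 \<Rightarrow> real \<Rightarrow> mat2" where
  "orbit_mat XL XR g t = (mexp (t *\<^sub>R XL) ** g) ** mexp (t *\<^sub>R - XR)"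

text \<open>\<open>killing_mat XL XR g = (XL - Ad(g) XR) g\<close>; as \<open>det g = 1\<close>, its norm
  \<^const>\<open>lq\<close> is the paper's \<open>- det (XL - Ad(g) XR)\<close>.\<close>

definition killing_mat :: "mat2 \<Rightarrow> mat2 \<Rightarrow> mat2 \<Rightarrow> mat2" where
  "killing_mat XL XR g = XL ** g - g ** XR"

lemma orbit_mat_zero [simp]: "orbit_mat XL XR g 0 = g"
  by (simp add: orbit_mat_def mexp_zero)

lemma continuous_on_orbit_mat [continuous_intros]:
  assumes "trace XL = 0" "trace XR = 0" "continuous_on S f"
  shows "continuous_on S (\<lambda>s. orbit_mat XL XR g (f s))"
  unfolding orbit_mat_def
  by (intro continuous_intros assms trace_sl2_closed)

lemma continuous_on_killing_mat [continuous_intros]: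
  "continuous_on S f \<Longrightarrow> continuous_on S (\<lambda>s. killing_mat XL XR (f s))"
  unfolding killing_mat_def by (intro continuous_intros)

lemma det_orbit_mat:
  assumes "trace XL = 0" "trace XR = 0" "det g = 1"
  shows "det (orbit_mat XL XR g t) = 1"
  using assms by (simp add: orbit_mat_def det_mul det_mexp_sl2 trace_sl2_closed
      del: scaleR_minus_right)

lemma has_vector_derivative_orbit_mat:
  assumes "trace XL = 0" "trace XR = 0"
  shows "(orbit_mat XL XR g has_vector_derivative killing_mat XL XR (orbit_mat XL XR g t)) (at t)"
proof -
  have "(orbit_mat XL XR g has_vector_derivative
      (mexp (t *\<^sub>R XL) ** g) ** (- XR ** mexp (t *\<^sub>R - XR))
      + (mexp (t *\<^sub>R XL) ** 0 + (XL ** mexp (t *\<^sub>R XL)) ** g) ** mexp (t *\<^sub>R - XR)) (at t)"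
    unfolding orbit_mat_def[abs_def]
    by (intro has_vector_derivative_matrix_mult has_vector_derivative_mexp_sl2
        has_vector_derivative_const assms trace_sl2_closed)
  then show ?thesis
    using mexp_sl2_commute[OF trace_sl2_closed(1)[OF assms(2)], of t]
    by (simp add: killing_mat_def orbit_mat_def matrix_mul_assoc matrix_neg_right
        del: scaleR_minus_right)
qed

lemma killing_mat_orbit_mat:
  assumes "trace XL = 0" "trace XR = 0"
  shows "killing_mat XL XR (orbit_mat XL XR g t)
       = (mexp (t *\<^sub>R XL) ** killing_mat XL XR g) ** mexp (t *\<^sub>R - XR)"
proof -
  let ?E = "mexp (t *\<^sub>R XL)" and ?F = "mexp (t *\<^sub>R - XR)"
  have commute: "XL ** ?E = ?E ** XL" "?F ** XR = XR ** ?F"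
    using mexp_sl2_commute[OF assms(1), of t] mexp_sl2_commute[OF trace_sl2_closed(1)[OF assms(2)], of t]
    by (simp_all add: matrix_neg_left matrix_neg_right del: scaleR_minus_right)
  have "XL ** ((?E ** g) ** ?F) - ((?E ** g) ** ?F) ** XR = ((XL ** ?E) ** g) ** ?F - (?E ** g) ** (?F ** XR)"
    by (simp add: matrix_mul_assoc)
  also have "\<dots> = ((?E ** XL) ** g) ** ?F - (?E ** g) ** (XR ** ?F)"
    by (simp only: commute)
  also have "\<dots> = (?E ** (XL ** g - g ** XR)) ** ?F"
    by (simp add: matrix_diff_ldistrib matrix_diff_rdistrib matrix_mul_assoc)
  finally show ?thesis by (simp only: killing_mat_def orbit_mat_def)
qed

lemma lq_killing_mat_orbit_mat:
  assumes "trace XL = 0" "trace XR = 0"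
  shows "lq (killing_mat XL XR (orbit_mat XL XR g t)) = lq (killing_mat XL XR g)"
  using assms
  by (simp add: killing_mat_orbit_mat lq_def det_mul det_mexp_sl2 trace_sl2_closed
      del: scaleR_minus_right)

lemma killing_mat_orbit_mat_eq_0_iff:
  assumes "trace XL = 0" "trace XR = 0"
  shows "killing_mat XL XR (orbit_mat XL XR g t) = 0 \<longleftrightarrow> killing_mat XL XR g = 0"
proof
  have inv: "mexp (t *\<^sub>R - X) ** mexp (t *\<^sub>R X) = mat 1" if "trace X = 0" for X
    using mexp_sl2_mult_neg[OF trace_sl2_closed(1)[OF that], of t] by simp
  assume "killing_mat XL XR (orbit_mat XL XR g t) = 0"
  have "killing_mat XL XR g
      = (mexp (t *\<^sub>R - XL) ** mexp (t *\<^sub>R XL)) ** killing_mat XL XR g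
        ** (mexp (t *\<^sub>R - XR) ** mexp (t *\<^sub>R XR))"
    by (simp only: inv assms matrix_mul_lid matrix_mul_rid)
  also have "\<dots> = mexp (t *\<^sub>R - XL) ** killing_mat XL XR (orbit_mat XL XR g t) ** mexp (t *\<^sub>R XR)"
    by (simp only: killing_mat_orbit_mat[OF assms] matrix_mul_assoc)
  also have "\<dots> = 0" by (simp add: \<open>killing_mat XL XR (orbit_mat XL XR g t) = 0\<close>)
  finally show "killing_mat XL XR g = 0" .
qed (simp add: killing_mat_orbit_mat[OF assms])

lemma act_flow_eq:
  "act (flow XL XR t) x = tmult (tmult (texp (t *\<^sub>R XL)) x) (tinv (texp (t *\<^sub>R XR)))"
  by (simp add: act_def flow_def)

lemma act_flow_zero [simp]: "act (flow XL XR 0) x = x"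
  by (simp add: act_flow_eq texp_zero tmult_te_left tinv_te tmult_te_right)

lemma continuous_on_act_flow:
  assumes "trace XL = 0" "trace XR = 0"
  shows "continuous_on UNIV (\<lambda>t. act (flow XL XR t) x)"
  unfolding act_flow_eq
  by (intro continuous_on_tmult continuous_on_tinv continuous_on_texp_line assms continuous_on_const)

lemma cov_proj_act_flow:
  assumes "trace XL = 0" "trace XR = 0"
  shows "cov_proj (act (flow XL XR t) x) = orbit_mat XL XR (cov_proj x) t"
  by (simp add: act_flow_eq cov_proj_tmult cov_proj_tinv cov_proj_texp trace_sl2_closed assms
      matrix_inv_mexp_sl2 orbit_mat_def del: scaleR_minus_right)

lemma killing_vec_eq:
  assumes "trace XL = 0" "trace XR = 0"
  shows "killing_vec XL XR x = killing_mat XL XR (cov_proj x)"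
  using vector_derivative_at[OF has_vector_derivative_orbit_mat[OF assms, of "cov_proj x" 0]]
  by (simp add: killing_vec_def cov_proj_act_flow[OF assms] fun_eq_iff[symmetric])

section \<open>Causality in the hemisphere model\<close>

definition space_proj :: "mat2 \<Rightarrow> real \<times> complex" where
  "space_proj m = (1 / rho m, Complex (x3 m / rho m) (x4 m / rho m))"

definition radial_pairing :: "mat2 \<Rightarrow> mat2 \<Rightarrow> real" where
  "radial_pairing m v = x1 m * x1 v + x2 m * x2 v"

definition space_proj_deriv :: "mat2 \<Rightarrow> mat2 \<Rightarrow> real \<times> complex" where
  "space_proj_deriv m v = (- radial_pairing m v / rho m ^ 3,
     Complex (x3 v / rho m - radial_pairing m v * x3 m / rho m ^ 3)
             (x4 v / rho m - radial_pairing m v * x4 m / rho m ^ 3))"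

definition time_deriv :: "mat2 \<Rightarrow> mat2 \<Rightarrow> real" where
  "time_deriv m v = (x1 m * x2 v - x2 m * x1 v) / (rho m)\<^sup>2"

lemma tangent_SL2:
  assumes "(f has_vector_derivative v) (at t)" "\<And>u. det (f u) = 1"
  shows "radial_pairing (f t) v = x3 (f t) * x3 v + x4 (f t) * x4 v"
proof -
  have "((\<lambda>u. det (f u)) has_real_derivative
      2 * x1 (f t) * x1 v + 2 * x2 (f t) * x2 v - 2 * x3 (f t) * x3 v - 2 * x4 (f t) * x4 v) (at t)"
    unfolding det_coords by (auto intro!: derivative_eq_intros has_real_derivative_coords[OF assms(1)])
  moreover have "((\<lambda>u. det (f u)) has_real_derivative 0) (at t)"
    using assms(2) DERIV_const by simp
  ultimately show ?thesis
    unfolding radial_pairing_def by (auto dest: DERIV_unique)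
qed

lemma norm_space_proj_deriv_sq:
  assumes "det m = 1" and tangent: "radial_pairing m v = x3 m * x3 v + x4 m * x4 v"
  shows "(norm (space_proj_deriv m v))\<^sup>2 - (time_deriv m v)\<^sup>2 = lq v / (rho m)\<^sup>2"
proof -
  define r B A where "r = rho m" and "B = radial_pairing m v" and "A = x1 m * x2 v - x2 m * x1 v"
  have r: "r > 0" using rho_pos[OF assms(1)] by (simp add: r_def)
  have r_sq: "r\<^sup>2 = (x1 m)\<^sup>2 + (x2 m)\<^sup>2" "r\<^sup>2 = 1 + (x3 m)\<^sup>2 + (x4 m)\<^sup>2"
    using rho_sq[of m] SL2_coords[OF assms(1)] by (simp_all add: r_def)
  have lagrange: "A\<^sup>2 + B\<^sup>2 = r\<^sup>2 * ((x1 v)\<^sup>2 + (x2 v)\<^sup>2)"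
    unfolding A_def B_def radial_pairing_def r_sq(1) by algebra
  have "B\<^sup>2 + (r\<^sup>2 * x3 v - B * x3 m)\<^sup>2 + (r\<^sup>2 * x4 v - B * x4 m)\<^sup>2 - r\<^sup>2 * A\<^sup>2
      = r ^ 4 * lq v"
    using lagrange r_sq(2) tangent unfolding lq_coords B_def[symmetric] by algebra
  moreover have "(norm (space_proj_deriv m v))\<^sup>2 - (time_deriv m v)\<^sup>2
      = (B\<^sup>2 + (r\<^sup>2 * x3 v - B * x3 m)\<^sup>2 + (r\<^sup>2 * x4 v - B * x4 m)\<^sup>2 - r\<^sup>2 * A\<^sup>2) / r ^ 6"
  proof -
    have e3: "x3 v / r - B * x3 m / r ^ 3 = (r\<^sup>2 * x3 v - B * x3 m) / r ^ 3"
      and e4: "x4 v / r - B * x4 m / r ^ 3 = (r\<^sup>2 * x4 v - B * x4 m) / r ^ 3"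
      and eA: "(A / r\<^sup>2)\<^sup>2 = r\<^sup>2 * A\<^sup>2 / r ^ 6"
      using r by (simp_all add: field_simps power2_eq_square power3_eq_cube eval_nat_numeral)
    have norm_sq: "(norm (a, z))\<^sup>2 = a\<^sup>2 + (Re z)\<^sup>2 + (Im z)\<^sup>2" for a :: real and z :: complex
      by (simp add: norm_Pair cmod_power2)
    show ?thesis
      unfolding space_proj_deriv_def time_deriv_def r_def[symmetric] B_def[symmetric]
        A_def[symmetric] norm_sq complex.sel fst_conv snd_conv e3 e4 eA
      by (simp add: power_divide flip: power_mult) (simp only: add_divide_distrib diff_divide_distrib)
  qed
  ultimately have "(norm (space_proj_deriv m v))\<^sup>2 - (time_deriv m v)\<^sup>2 = r ^ 4 * lq v / (r ^ 4 * r\<^sup>2)"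
    by (simp flip: power_add)
  with r show ?thesis
    by (simp add: r_def[symmetric] del: mult_divide_mult_cancel_left_if)
       (simp add: field_simps eval_nat_numeral)
qed

lemma causal_cross_bound:
  assumes "det m = 1" and tangent: "radial_pairing m v = x3 m * x3 v + x4 m * x4 v"
    and "lq v \<le> 0"
  shows "(x4 m * x3 v - x3 m * x4 v)\<^sup>2 + ((x1 v)\<^sup>2 + (x2 v)\<^sup>2) \<le> (x1 m * x2 v - x2 m * x1 v)\<^sup>2"
proof -
  define A C B where "A = x1 m * x2 v - x2 m * x1 v" and "C = x4 m * x3 v - x3 m * x4 v"
    and "B = radial_pairing m v"
  have rho_ge: "(rho m)\<^sup>2 - 1 \<ge> 0" using SL2_coords[OF assms(1)] by simp
  have "C\<^sup>2 = ((rho m)\<^sup>2 - 1) * ((x3 v)\<^sup>2 + (x4 v)\<^sup>2) - B\<^sup>2"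
    unfolding C_def B_def tangent SL2_coords[OF assms(1)] by (simp add: power2_eq_square algebra_simps)
  also have "\<dots> \<le> ((rho m)\<^sup>2 - 1) * ((x1 v)\<^sup>2 + (x2 v)\<^sup>2) - B\<^sup>2"
    using mult_left_mono[OF _ rho_ge] assms(3) by (simp add: lq_coords)
  also have "\<dots> = A\<^sup>2 - ((x1 v)\<^sup>2 + (x2 v)\<^sup>2)"
    unfolding A_def B_def radial_pairing_def rho_sq by (simp add: power2_eq_square algebra_simps)
  finally show ?thesis by (simp add: A_def C_def)
qed

lemma time_deriv_nonneg:
  assumes "det m = 1" "radial_pairing m v = x3 m * x3 v + x4 m * x4 v" "future_causal m v"
  shows "time_deriv m v \<ge> 0"
proof -
  define A C where "A = x1 m * x2 v - x2 m * x1 v" and "C = x4 m * x3 v - x3 m * x4 v"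
  have "C\<^sup>2 + ((x1 v)\<^sup>2 + (x2 v)\<^sup>2) \<le> A\<^sup>2"
    using causal_cross_bound[OF assms(1,2)] assms(3) by (simp add: A_def C_def future_causal_def)
  then have "C\<^sup>2 \<le> A\<^sup>2"
    by (smt (verit) zero_le_power2)
  moreover have "C < A"
    using assms(3) by (simp add: future_causal_def lB_mult_Jrot A_def C_def)
  have "A \<ge> 0"
  proof (rule ccontr)
    assume "\<not> A \<ge> 0"
    then have "(- A)\<^sup>2 < (- C)\<^sup>2" using \<open>C < A\<close> by (intro power_strict_mono) auto
    with \<open>C\<^sup>2 \<le> A\<^sup>2\<close> show False by simp
  qed
  then show ?thesis by (simp add: time_deriv_def A_def)
qed

lemma lB_Jrot_nonzero:
  assumes "det m = 1" "radial_pairing m v = x3 m * x3 v + x4 m * x4 v" "v \<noteq> 0" "lq v \<le> 0"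
  shows "lB v (m ** Jrot) \<noteq> 0"
proof
  assume "lB v (m ** Jrot) = 0"
  then have "x4 m * x3 v - x3 m * x4 v = x1 m * x2 v - x2 m * x1 v"
    by (simp add: lB_mult_Jrot)
  with causal_cross_bound[OF assms(1,2,4)] have "x1 v = 0" "x2 v = 0"
    by (simp_all add: sum_power2_le_zero_iff)
  with assms(4) have "x3 v = 0" "x4 v = 0"
    by (simp_all add: lq_coords sum_power2_le_zero_iff)
  with \<open>x1 v = 0\<close> \<open>x2 v = 0\<close> have "v = 0"
    by (simp add: mat2_eq_iff_coords coords_defs)
  with assms(3) show False ..
qed

lemma norm_space_proj_deriv_le:
  assumes "det m = 1" "radial_pairing m v = x3 m * x3 v + x4 m * x4 v" "future_causal m v"
  shows "norm (space_proj_deriv m v) \<le> time_deriv m v"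
proof -
  have "lq v \<le> 0" using assms(3) by (simp add: future_causal_def)
  then have "lq v / (rho m)\<^sup>2 \<le> 0" by (rule divide_nonpos_nonneg) simp
  then have "(norm (space_proj_deriv m v))\<^sup>2 \<le> (time_deriv m v)\<^sup>2"
    using norm_space_proj_deriv_sq[OF assms(1,2)] by linarith
  then show ?thesis using time_deriv_nonneg[OF assms] by (rule power2_le_imp_le)
qed

lemma abs_time_deriv_less:
  assumes "det m = 1" "radial_pairing m v = x3 m * x3 v + x4 m * x4 v" "lq v > 0"
  shows "\<bar>time_deriv m v\<bar> < norm (space_proj_deriv m v)"
proof -
  have "lq v / (rho m)\<^sup>2 > 0"
    using assms(3) rho_pos[OF assms(1)] by (intro divide_pos_pos) simp_all
  then have "\<bar>time_deriv m v\<bar>\<^sup>2 < (norm (space_proj_deriv m v))\<^sup>2"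
    using norm_space_proj_deriv_sq[OF assms(1,2)] by simp
  then show ?thesis by (rule power2_less_imp_less) simp
qed

lemma has_real_derivative_rho:
  assumes "(f has_vector_derivative v) (at t)" "det (f t) = 1"
  shows "((\<lambda>u. rho (f u)) has_real_derivative radial_pairing (f t) v / rho (f t)) (at t)"
proof -
  have pos: "(x1 (f t))\<^sup>2 + (x2 (f t))\<^sup>2 > 0"
    using rho_pos[OF assms(2)] by (simp add: rho_def)
  have "((\<lambda>u. (x1 (f u))\<^sup>2 + (x2 (f u))\<^sup>2) has_real_derivative 2 * radial_pairing (f t) v) (at t)"
    by (auto intro!: derivative_eq_intros has_real_derivative_coords[OF assms(1)]
        simp: radial_pairing_def)
  from DERIV_chain2[OF DERIV_real_sqrt[OF pos] this] show ?thesis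
    unfolding rho_def by (simp add: field_simps)
qed

lemma has_vector_derivative_space_proj:
  assumes "(f has_vector_derivative v) (at t)" "det (f t) = 1"
  shows "((\<lambda>u. space_proj (f u)) has_vector_derivative space_proj_deriv (f t) v) (at t)"
proof -
  note coords = has_real_derivative_coords[OF assms(1)]
  note rho = has_real_derivative_rho[OF assms]
  have r: "rho (f t) \<noteq> 0" using rho_pos[OF assms(2)] by simp
  have "((\<lambda>u. 1 / rho (f u)) has_real_derivative - radial_pairing (f t) v / rho (f t) ^ 3) (at t)"
    and "((\<lambda>u. x3 (f u) / rho (f u)) has_real_derivative
        x3 v / rho (f t) - radial_pairing (f t) v * x3 (f t) / rho (f t) ^ 3) (at t)"
    and "((\<lambda>u. x4 (f u) / rho (f u)) has_real_derivative
        x4 v / rho (f t) - radial_pairing (f t) v * x4 (f t) / rho (f t) ^ 3) (at t)"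
    using r by (auto intro!: derivative_eq_intros rho coords simp: power2_eq_square power3_eq_cube field_simps)
  then show ?thesis
    unfolding space_proj_def[abs_def] space_proj_deriv_def
    by (intro has_vector_derivative_Pair)
       (simp_all add: has_vector_derivative_complex_iff has_real_derivative_iff_has_vector_derivative)
qed

lemma sin_fst_diff:
  "sin (fst z - fst z0)
   = (x1 (cov_proj z0) * x2 (cov_proj z) - x2 (cov_proj z0) * x1 (cov_proj z))
     / (rho (cov_proj z0) * rho (cov_proj z))"
  using cover_radius_pos[of "snd z"] cover_radius_pos[of "snd z0"]
  by (simp add: coords_cov_proj rho_cov_proj sin_diff field_simps)

text \<open>Near \<open>t\<close> the time coordinate is \<open>fst (c t) + arcsin (sin (fst (c u) - fst (c t)))\<close>,
  and by \<open>sin_fst_diff\<close> the sine is a smooth function of \<open>cov_proj (c u)\<close>.\<close>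

lemma has_real_derivative_fst_lift:
  assumes cont: "continuous (at t) (\<lambda>u. fst (c u))"
    and deriv: "((\<lambda>u. cov_proj (c u)) has_vector_derivative v) (at t)"
  shows "((\<lambda>u. fst (c u)) has_real_derivative time_deriv (cov_proj (c t)) v) (at t)"
proof -
  define m0 where "m0 = cov_proj (c t)"
  define q where "q u = sin (fst (c u) - fst (c t))" for u
  have r0: "rho m0 > 0" unfolding m0_def by (rule rho_pos[OF det_cov_proj])
  have q_eq: "q = (\<lambda>u. (x1 m0 * x2 (cov_proj (c u)) - x2 m0 * x1 (cov_proj (c u)))
                       / (rho m0 * rho (cov_proj (c u))))"
    by (simp add: fun_eq_iff q_def m0_def sin_fst_diff)
  have "(q has_real_derivative
      ((x1 m0 * x2 v - x2 m0 * x1 v) * (rho m0 * rho m0) - 0 * (rho m0 * (radial_pairing m0 v / rho m0)))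
      / (rho m0 * rho m0 * (rho m0 * rho m0))) (at t)"
    unfolding q_eq
    using has_real_derivative_coords[OF deriv] has_real_derivative_rho[OF deriv det_cov_proj] r0
    by (auto intro!: derivative_eq_intros simp: m0_def)
  then have q_deriv: "(q has_real_derivative time_deriv m0 v) (at t)"
    using r0 by (simp add: time_deriv_def power2_eq_square)
  have "((\<lambda>u. arcsin (q u)) has_real_derivative inverse (sqrt (1 - (q t)\<^sup>2)) * time_deriv m0 v) (at t)"
    by (rule DERIV_chain2[OF DERIV_arcsin q_deriv]) (simp_all add: q_def)
  then have local_deriv: "((\<lambda>u. fst (c t) + arcsin (q u)) has_real_derivative time_deriv m0 v) (at t)"
    using DERIV_add[OF DERIV_const[of "fst (c t)"]] by (simp add: q_def)
  obtain d where "d > 0" and d: "\<And>u. dist u t < d \<Longrightarrow> \<bar>fst (c u) - fst (c t)\<bar> < pi / 2"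
    using cont unfolding continuous_at_eps_delta dist_real_def by (meson pi_half_gt_zero)
  have "fst (c t) + arcsin (q u) = fst (c u)" if "dist u t < d" for u
  proof -
    have "- (pi / 2) \<le> fst (c u) - fst (c t)" "fst (c u) - fst (c t) \<le> pi / 2"
      using d[OF that] unfolding abs_less_iff by linarith+
    then show ?thesis unfolding q_def by (simp add: arcsin_sin)
  qed
  then show ?thesis
    unfolding m0_def[symmetric]
    by (intro has_field_derivative_transform_within[OF local_deriv \<open>d > 0\<close>]) auto
qed

lemma differentiable_bound_finite_exceptions:
  fixes f :: "real \<Rightarrow> 'a::real_normed_vector" and \<phi> :: "real \<Rightarrow> real"
  assumes "finite K" "a \<le> b" "continuous_on {a..b} f" "continuous_on {a..b} \<phi>"
    and "\<And>x. x \<in> {a<..<b} - K \<Longrightarrow> (f has_vector_derivative f' x) (at x)"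
    and "\<And>x. x \<in> {a<..<b} - K \<Longrightarrow> (\<phi> has_real_derivative \<phi>' x) (at x)"
    and "\<And>x. x \<in> {a<..<b} - K \<Longrightarrow> norm (f' x) \<le> \<phi>' x"
  shows "norm (f b - f a) \<le> \<phi> b - \<phi> a"
  using assms
proof (induction K arbitrary: a b rule: finite_induct)
  case empty
  show ?case
  proof (cases "a = b")
    case False
    with empty.prems show ?thesis
      by (intro differentiable_bound_general[of a b f \<phi> f' \<phi>'])
         (auto simp: has_real_derivative_iff_has_vector_derivative)
  qed simp
next
  case (insert k K)
  show ?case
  proof (cases "k \<in> {a<..<b}")
    case True
    have "norm (f k - f a) \<le> \<phi> k - \<phi> a" "norm (f b - f k) \<le> \<phi> b - \<phi> k"
      using True insert.prems
      by (auto intro!: insert.IH intro: continuous_on_subset)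
    moreover have "norm (f b - f a) \<le> norm (f b - f k) + norm (f k - f a)"
      using norm_triangle_ineq[of "f b - f k" "f k - f a"] by simp
    ultimately show ?thesis by simp
  next
    case False
    then have "{a<..<b} - insert k K = {a<..<b} - K" by auto
    with insert.prems show ?thesis by (intro insert.IH) auto
  qed
qed

lemma continuous_on_cover_radius [continuous_intros]:
  "continuous_on S f \<Longrightarrow> continuous_on S (\<lambda>s. cover_radius (f s))"
  unfolding cover_radius_def by (intro continuous_intros)

lemma continuous_on_space_proj_cov_proj [continuous_intros]:
  assumes "continuous_on S c"
  shows "continuous_on S (\<lambda>u. space_proj (cov_proj (c u)))"
proof -
  have "space_proj (cov_proj z)
      = (1 / cover_radius (snd z), Complex (Re (snd z) / cover_radius (snd z)) (Im (snd z) / cover_radius (snd z)))"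
    for z by (simp add: space_proj_def rho_cov_proj coords_cov_proj)
  moreover have "cover_radius (snd (c u)) \<noteq> 0" for u
    using cover_radius_pos by (metis less_irrefl)
  ultimately show ?thesis
    unfolding Complex_eq by (simp only:) (intro continuous_intros assms, auto)
qed

lemma future_causal_curve_bound:
  assumes "future_causal_curve c"
  shows "norm (space_proj (cov_proj (c 1)) - space_proj (cov_proj (c 0))) \<le> fst (c 1) - fst (c 0)"
proof -
  obtain K where "finite K" and K: "\<And>t. t \<in> {0<..<1} - K \<Longrightarrow> \<exists>v.
      ((\<lambda>u. cov_proj (c u)) has_vector_derivative v) (at t) \<and> future_causal (cov_proj (c t)) v"
    using assms unfolding future_causal_curve_def o_def by blast
  then obtain V where V: "\<And>t. t \<in> {0<..<1} - K \<Longrightarrow>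
      ((\<lambda>u. cov_proj (c u)) has_vector_derivative V t) (at t) \<and> future_causal (cov_proj (c t)) (V t)"
    by metis
  have cont: "continuous_on {0..1} c" using assms unfolding future_causal_curve_def by blast
  have "isCont c t" if "t \<in> {0<..<1}" for t
    using continuous_on_interior[OF cont] that by auto
  moreover have "radial_pairing (cov_proj (c t)) (V t)
      = x3 (cov_proj (c t)) * x3 (V t) + x4 (cov_proj (c t)) * x4 (V t)" if "t \<in> {0<..<1} - K" for t
    using tangent_SL2[of "\<lambda>u. cov_proj (c u)"] V[OF that] det_cov_proj by blast
  ultimately show ?thesis
    using V
    by (intro differentiable_bound_finite_exceptions[OF \<open>finite K\<close>, of 0 1, where
          f' = "\<lambda>t. space_proj_deriv (cov_proj (c t)) (V t)" and \<phi>' = "\<lambda>t. time_deriv (cov_proj (c t)) (V t)"])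
       (auto intro!: continuous_intros cont has_vector_derivative_space_proj
         has_real_derivative_fst_lift norm_space_proj_deriv_le det_cov_proj)
qed

lemma causal_le_bound:
  assumes "causal_le x y"
  shows "norm (space_proj (cov_proj y) - space_proj (cov_proj x)) \<le> fst y - fst x"
  using assms future_causal_curve_bound unfolding causal_le_def by auto

lemma not_causally_related_if_space_gap:
  assumes "\<bar>fst y - fst x\<bar> < norm (space_proj (cov_proj y) - space_proj (cov_proj x))"
  shows "\<not> causally_related y x"
  using assms causal_le_bound[of x y] causal_le_bound[of y x]
  by (auto simp: causally_related_def norm_minus_commute)

section \<open>Absolute and standard causal subsets\<close>

lemma tendsto_difference_quotient:
  fixes F :: "real \<Rightarrow> 'a::real_normed_vector"
  assumes "(F has_vector_derivative D) (at 0)"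
  shows "((\<lambda>h. (1 / h) *\<^sub>R (F h - F 0)) \<longlongrightarrow> D) (at 0)"
proof -
  have lim: "((\<lambda>h. norm ((F h - F 0) - (h - 0) *\<^sub>R D) / norm (h - 0)) \<longlongrightarrow> 0) (at 0)"
    using assms unfolding has_vector_derivative_def has_derivative_iff_norm by blast
  have eq: "norm ((F h - F 0) - (h - 0) *\<^sub>R D) / norm (h - 0) = norm ((1 / h) *\<^sub>R (F h - F 0) - D)"
    if "h \<noteq> 0" for h
  proof -
    have "(1 / h) *\<^sub>R (F h - F 0) - D = (1 / h) *\<^sub>R ((F h - F 0) - h *\<^sub>R D)"
      using that by (simp add: scaleR_diff_right)
    then show ?thesis by (simp add: divide_inverse mult.commute)
  qed
  have "((\<lambda>h. norm ((1 / h) *\<^sub>R (F h - F 0) - D)) \<longlongrightarrow> 0) (at 0)"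
  proof (rule Lim_transform_eventually[OF lim])
    show "\<forall>\<^sub>F h in at 0. norm ((F h - F 0) - (h - 0) *\<^sub>R D) / norm (h - 0)
        = norm ((1 / h) *\<^sub>R (F h - F 0) - D)"
      unfolding eventually_at_filter by (intro always_eventually allI impI eq)
  qed
  then show ?thesis
    by (simp add: tendsto_norm_zero_iff LIM_zero_iff)
qed

lemma exists_inverse_nat_gap:
  fixes F :: "real \<Rightarrow> 'a::real_normed_vector" and \<phi> :: "real \<Rightarrow> real"
  assumes "(F has_vector_derivative D) (at 0)" "(\<phi> has_real_derivative T) (at 0)" "\<bar>T\<bar> < norm D"
  shows "\<exists>n::nat. n \<ge> 1 \<and> \<bar>\<phi> (1 / real n) - \<phi> 0\<bar> < norm (F (1 / real n) - F 0)"
proof -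
  have seq: "filterlim (\<lambda>n::nat. 1 / real (Suc n)) (at 0) sequentially"
    by (rule filterlim_atI) (use LIMSEQ_inverse_real_of_nat in \<open>simp_all add: divide_inverse\<close>)
  define qF where "qF n = real (Suc n) *\<^sub>R (F (1 / real (Suc n)) - F 0)" for n
  define q\<phi> where "q\<phi> n = real (Suc n) * (\<phi> (1 / real (Suc n)) - \<phi> 0)" for n
  have "(qF \<longlongrightarrow> D) sequentially"
    unfolding qF_def using filterlim_compose[OF tendsto_difference_quotient[OF assms(1)] seq]
    by (simp add: o_def)
  moreover have "(\<phi> has_vector_derivative T) (at 0)"
    using assms(2) by (simp add: has_real_derivative_iff_has_vector_derivative)
  from filterlim_compose[OF tendsto_difference_quotient[OF this] seq]
  have "(q\<phi> \<longlongrightarrow> T) sequentially"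
    unfolding q\<phi>_def by (simp add: o_def)
  ultimately have "((\<lambda>n. norm (qF n) - norm (q\<phi> n)) \<longlongrightarrow> norm D - norm T) sequentially"
    by (intro tendsto_intros)
  moreover have "norm D - norm T > 0" using assms(3) by simp
  ultimately obtain n where "norm (qF n) - norm (q\<phi> n) > 0"
    by (metis (no_types) eventually_sequentially order.refl order_tendstoD(1))
  then have "real (Suc n) * \<bar>\<phi> (1 / real (Suc n)) - \<phi> 0\<bar> < real (Suc n) * norm (F (1 / real (Suc n)) - F 0)"
    by (simp add: qF_def q\<phi>_def abs_mult)
  then show ?thesis
    by (intro exI[of _ "Suc n"]) (simp add: mult_less_cancel_left_pos del: of_nat_Suc)
qed

lemma spacelike_imp_in_Cset:
  assumes tL: "trace XL = 0" and tR: "trace XR = 0" and "x \<in> Dset XL XR"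
  shows "\<exists>n::nat. n \<ge> 1 \<and> x \<in> Cset (flow XL XR (1 / real n))"
proof -
  let ?L = "\<lambda>t. act (flow XL XR t) x" and ?v = "killing_mat XL XR (cov_proj x)"
  have spacelike: "lq ?v > 0"
    using assms(3) by (simp add: Dset_def killing_vec_eq[OF tL tR])
  have deriv: "((\<lambda>u. cov_proj (?L u)) has_vector_derivative ?v) (at 0)"
    using has_vector_derivative_orbit_mat[OF tL tR, of "cov_proj x" 0]
    by (simp add: cov_proj_act_flow[OF tL tR] fun_eq_iff[symmetric])
  have "radial_pairing (cov_proj x) ?v = x3 (cov_proj x) * x3 ?v + x4 (cov_proj x) * x4 ?v"
    using tangent_SL2[OF deriv] by (simp add: det_cov_proj)
  with spacelike have "\<bar>time_deriv (cov_proj x) ?v\<bar> < norm (space_proj_deriv (cov_proj x) ?v)"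
    by (intro abs_time_deriv_less det_cov_proj)
  moreover have "((\<lambda>u. space_proj (cov_proj (?L u))) has_vector_derivative
      space_proj_deriv (cov_proj x) ?v) (at 0)"
    using has_vector_derivative_space_proj[OF deriv] by (simp add: det_cov_proj)
  moreover have "((\<lambda>u. fst (?L u)) has_real_derivative time_deriv (cov_proj x) ?v) (at 0)"
    using has_real_derivative_fst_lift[OF _ deriv] continuous_on_act_flow[OF tL tR, of x]
    by (simp add: continuous_on_eq_continuous_at continuous_intros)
  ultimately obtain n :: nat where "n \<ge> 1"
    and gap: "\<bar>fst (?L (1 / real n)) - fst (?L 0)\<bar>
       < norm (space_proj (cov_proj (?L (1 / real n))) - space_proj (cov_proj (?L 0)))"
    using exists_inverse_nat_gap by blast
  have "\<not> causally_related (?L (1 / real n)) x"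
    by (rule not_causally_related_if_space_gap) (use gap in simp)
  with \<open>n \<ge> 1\<close> show ?thesis by (auto simp: Cset_def)
qed

lemma act_flow_fixed:
  assumes tL: "trace XL = 0" and tR: "trace XR = 0" and "killing_mat XL XR (cov_proj x) = 0"
  shows "act (flow XL XR t) x = x"
proof -
  have "killing_mat XL XR (orbit_mat XL XR (cov_proj x) t) = 0" for t
    using assms(3) by (simp add: killing_mat_orbit_mat_eq_0_iff[OF tL tR])
  then have "(orbit_mat XL XR (cov_proj x) has_derivative (\<lambda>h. 0)) (at t within UNIV)" for t
    using has_vector_derivative_orbit_mat[OF tL tR, of "cov_proj x" t]
    by (simp add: has_vector_derivative_def)
  then have "\<exists>k. \<forall>t\<in>UNIV. orbit_mat XL XR (cov_proj x) t = k"
    by (intro has_derivative_zero_constant[OF convex_UNIV])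
  then have "orbit_mat XL XR (cov_proj x) t = cov_proj x" for t
    by (metis UNIV_I orbit_mat_zero)
  show ?thesis
  proof (rule cov_proj_lift_unique[of UNIV "\<lambda>t. act (flow XL XR t) x" "\<lambda>_. x" 0 t])
    show "continuous_on UNIV (\<lambda>t. act (flow XL XR t) x)" by (rule continuous_on_act_flow[OF tL tR])
    show "cov_proj (act (flow XL XR s) x) = cov_proj x" for s
      by (simp add: cov_proj_act_flow[OF tL tR] \<open>\<And>t. orbit_mat XL XR (cov_proj x) t = cov_proj x\<close>)
  qed simp_all
qed

text \<open>The sign cannot change because a nonzero causal vector is never orthogonal to the
  timelike field \<open>g J\<close>.\<close>

lemma killing_mat_orientation_constant:
  assumes tL: "trace XL = 0" and tR: "trace XR = 0" and "det g = 1"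
    and "killing_mat XL XR g \<noteq> 0" "lq (killing_mat XL XR g) \<le> 0"
  defines "\<sigma> \<equiv> \<lambda>t. lB (killing_mat XL XR (orbit_mat XL XR g t)) (orbit_mat XL XR g t ** Jrot)"
  shows "(\<forall>t. \<sigma> t < 0) \<or> (\<forall>t. \<sigma> t > 0)"
proof -
  have nonzero: "\<sigma> t \<noteq> 0" for t
    unfolding \<sigma>_def
  proof (rule lB_Jrot_nonzero)
    show "det (orbit_mat XL XR g t) = 1" by (rule det_orbit_mat[OF tL tR assms(3)])
    show "radial_pairing (orbit_mat XL XR g t) (killing_mat XL XR (orbit_mat XL XR g t))
      = x3 (orbit_mat XL XR g t) * x3 (killing_mat XL XR (orbit_mat XL XR g t))
        + x4 (orbit_mat XL XR g t) * x4 (killing_mat XL XR (orbit_mat XL XR g t))"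
      by (rule tangent_SL2[OF has_vector_derivative_orbit_mat[OF tL tR] det_orbit_mat[OF tL tR assms(3)]])
  qed (use assms(4,5) in \<open>simp_all add: killing_mat_orbit_mat_eq_0_iff[OF tL tR]
        lq_killing_mat_orbit_mat[OF tL tR]\<close>)
  have cont: "continuous_on {a..b} \<sigma>" for a b
    unfolding \<sigma>_def by (intro continuous_intros tL tR)
  have no_sign_change: False if "\<sigma> a < 0" "\<sigma> b > 0" for a b
  proof (cases "a \<le> b")
    case True
    have "\<exists>c\<ge>a. c \<le> b \<and> \<sigma> c = 0" by (rule IVT') (use that True cont in auto)
    with nonzero show False by blast
  next
    case False
    have "\<exists>c\<ge>b. c \<le> a \<and> \<sigma> c = 0" by (rule IVT2') (use that False cont in auto)
    with nonzero show False by blast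
  qed
  show ?thesis
  proof (rule disjCI)
    assume "\<not> (\<forall>t. \<sigma> t > 0)"
    then obtain a where "\<sigma> a < 0" using nonzero by (meson not_less_iff_gr_or_eq)
    then show "\<forall>t. \<sigma> t < 0" using no_sign_change nonzero by (meson not_less_iff_gr_or_eq)
  qed
qed

lemma lB_scaleR_left: "lB (c *\<^sub>R u) v = c * lB u v"
  by (simp add: lB_def lq_coords coords_add coords_scaleR power2_eq_square algebra_simps)

lemma orbit_segment_future_causal:
  assumes tL: "trace XL = 0" and tR: "trace XR = 0" and "b \<noteq> 0"
    and "killing_mat XL XR (cov_proj x) \<noteq> 0" "lq (killing_mat XL XR (cov_proj x)) \<le> 0"
    and orientation: "\<And>s. s \<in> {0..1} \<Longrightarrow>
      b * lB (killing_mat XL XR (orbit_mat XL XR (cov_proj x) (a + b * s)))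
             (orbit_mat XL XR (cov_proj x) (a + b * s) ** Jrot) < 0"
  shows "future_causal_curve (\<lambda>s. act (flow XL XR (a + b * s)) x)"
proof -
  let ?M = "orbit_mat XL XR (cov_proj x)"
  let ?K = "\<lambda>s. b *\<^sub>R killing_mat XL XR (?M (a + b * s))"
  have proj: "cov_proj \<circ> (\<lambda>s. act (flow XL XR (a + b * s)) x) = (\<lambda>s. ?M (a + b * s))"
    by (simp add: fun_eq_iff cov_proj_act_flow[OF tL tR])
  have deriv: "((\<lambda>s. ?M (a + b * s)) has_vector_derivative ?K s) (at s)" for s
  proof -
    have "((\<lambda>s. a + b * s) has_vector_derivative b) (at s)"
      by (auto intro!: derivative_eq_intros simp flip: has_real_derivative_iff_has_vector_derivative)
    from vector_diff_chain_at[OF this has_vector_derivative_orbit_mat[OF tL tR]] show ?thesis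
      by (simp add: o_def)
  qed
  have causal: "future_causal (?M (a + b * s)) (?K s)" if "s \<in> {0..1}" for s
    using assms(3-5) orientation[OF that]
    by (simp add: future_causal_def lq_scaleR lB_scaleR_left lq_killing_mat_orbit_mat[OF tL tR]
        killing_mat_orbit_mat_eq_0_iff[OF tL tR] mult_nonneg_nonpos)
  show ?thesis
    unfolding future_causal_curve_def proj
  proof (intro conjI exI[of _ "{}"] ballI)
    show "continuous_on {0..1} (\<lambda>s. act (flow XL XR (a + b * s)) x)"
      by (intro continuous_on_compose_UNIV[OF continuous_on_act_flow[OF tL tR]] continuous_intros)
    show "(\<lambda>s. ?M (a + b * s)) piecewise_C1_differentiable_on {0..1}"
      using deriv
      by (intro C1_differentiable_imp_piecewise)
         (auto simp: C1_differentiable_on_def intro!: exI[of _ ?K] continuous_intros tL tR)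
    fix t :: real assume "t \<in> {0<..<1} - {}"
    then show "\<exists>v. ((\<lambda>s. ?M (a + b * s)) has_vector_derivative v) (at t)
        \<and> future_causal (cov_proj (act (flow XL XR (a + b * t)) x)) v"
      using deriv[of t] causal[of t] by (auto simp: cov_proj_act_flow[OF tL tR] intro!: exI[of _ "?K t"])
  qed simp
qed

lemma causally_related_if_not_spacelike:
  assumes tL: "trace XL = 0" and tR: "trace XR = 0"
    and "lq (killing_mat XL XR (cov_proj x)) \<le> 0" "h > 0"
  shows "causally_related (act (flow XL XR h) x) x"
proof (cases "killing_mat XL XR (cov_proj x) = 0")
  case True
  then show ?thesis by (simp add: act_flow_fixed[OF tL tR] causally_related_def causal_le_def)
next
  case False
  let ?M = "orbit_mat XL XR (cov_proj x)"
  consider "\<forall>t. lB (killing_mat XL XR (?M t)) (?M t ** Jrot) < 0"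
    | "\<forall>t. lB (killing_mat XL XR (?M t)) (?M t ** Jrot) > 0"
    using killing_mat_orientation_constant[OF tL tR det_cov_proj False assms(3)] by blast
  then show ?thesis
  proof cases
    case 1
    have "future_causal_curve (\<lambda>s. act (flow XL XR (0 + h * s)) x)"
      by (rule orbit_segment_future_causal) (use 1 tL tR assms(3,4) False in \<open>auto simp: mult_pos_neg\<close>)
    then have "causal_le x (act (flow XL XR h) x)"
      unfolding causal_le_def by (intro disjI2 exI[of _ "\<lambda>s. act (flow XL XR (0 + h * s)) x"]) simp
    then show ?thesis by (simp add: causally_related_def)
  next
    case 2
    have "future_causal_curve (\<lambda>s. act (flow XL XR (h + (- h) * s)) x)"
      by (rule orbit_segment_future_causal) (use 2 tL tR assms(3,4) False in \<open>auto simp: mult_neg_pos\<close>)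
    then have "causal_le (act (flow XL XR h) x) x"
      unfolding causal_le_def by (intro disjI2 exI[of _ "\<lambda>s. act (flow XL XR (h + (- h) * s)) x"]) simp
    then show ?thesis by (simp add: causally_related_def)
  qed
qed

theorem mainTheorem4:
  fixes XL XR :: mat2
  assumes "XL \<in> sl2" and "XR \<in> sl2"
    and "synchronized (texp XL, texp XR)"
  shows "Dset XL XR = (\<Union>n\<in>{1::nat..}. Cset (flow XL XR (1 / real n)))"
proof -
  have tL: "trace XL = 0" and tR: "trace XR = 0"
    using assms(1,2) by (simp_all add: sl2_def)
  show ?thesis
  proof (intro equalityI subsetI)
    fix x assume "x \<in> Dset XL XR"
    then obtain n :: nat where "n \<ge> 1" "x \<in> Cset (flow XL XR (1 / real n))"
      using spacelike_imp_in_Cset[OF tL tR] by blast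
    then show "x \<in> (\<Union>n\<in>{1::nat..}. Cset (flow XL XR (1 / real n)))" by blast
  next
    fix x assume "x \<in> (\<Union>n\<in>{1::nat..}. Cset (flow XL XR (1 / real n)))"
    then obtain n :: nat where "n \<ge> 1" and "\<not> causally_related (act (flow XL XR (1 / real n)) x) x"
      by (auto simp: Cset_def)
    then have "\<not> lq (killing_mat XL XR (cov_proj x)) \<le> 0"
      using causally_related_if_not_spacelike[OF tL tR, of x "1 / real n"] by auto
    then show "x \<in> Dset XL XR"
      by (simp add: Dset_def killing_vec_eq[OF tL tR])
  qed
qed

end
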